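(* Let $\Gamma$ be a totally ordered additive abelian group, $E$ a finite set, and $\nu_{\mathsf{P}}\colon\Delta_E^r\to\overline{\Gamma}$ an $M$-convex function of rank $r$. Let $\widetilde{\nu}_{\mathsf{P}}\colon\Delta_E^{\leq r}\to\overline{\Gamma}$ be $\widetilde{\nu}_{\mathsf{P}}(\alpha)=\min\{\nu_{\mathsf{P}}(\beta)\mid\beta\in\Delta_E^r,\ \alpha_e\leq\beta_e\ \forall e\in E\}$. Let $Q$ be a finite set disjoint from $E$ and $\widetilde{E}=Q\sqcup E$, and identify $\mathbb{Z}^{\widetilde{E}}=\mathbb{Z}^Q\times\mathbb{Z}^E$. Define $\nu_{\widetilde{\mathsf{P}}}\colon\Delta_{\widetilde{E}}^r\to\overline{\Gamma}$ by $\nu_{\widetilde{\mathsf{P}}}((\alpha_Q,\alpha))=\widetilde{\nu}_{\mathsf{P}}(\alpha)$ for every $(\alpha_Q,\alpha)\in\Delta^r_{\widetilde{E}}$ with $\alpha\in\Delta_E^{\leq r}$ and $\alpha_Q\in\Delta_Q^{r-|\alpha|}$. Then $\nu_{\widetilde{\mathsf{P}}}$ is an $M$-convex function of rank $r$ on $\widetilde{E}$.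
   Context: $\overline{\Gamma}=\Gamma\sqcup\{\infty\}$ with $\infty$ larger than every element of $\Gamma$. For $s\in E$, $e_s$ is the standard basis vector of $\mathbb{Z}^E$. $|\alpha|=\sum_e\alpha_e$, $\Delta_E^k=\{\alpha\in\mathbb{Z}^E_{\ge0}\mid|\alpha|=k\}$, $\Delta_E^{\leq r}=\{\alpha\in\mathbb{Z}^E_{\ge 0}\mid |\alpha|\leq r\}$. An $M$-convex function of rank $r$ on $E$ is a map $\nu\colon\Delta_E^r\to\overline{\Gamma}$, not identically $\infty$, such that for all $\alpha,\beta\in\Delta_E^r$ and every $s\in E$ with $\alpha_s>\beta_s$ there is $t\in E$ with $\beta_t>\alpha_t$ and $\nu(\alpha)+\nu(\beta)\geq\nu(\alpha-e_s+e_t)+\nu(\beta-e_t+e_s)$. *)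

theory Defs
  imports Main
begin

datatype 'g gext = Fin 'g | Infty

fun gadd :: "'g::linordered_ab_group_add gext \<Rightarrow> 'g gext \<Rightarrow> 'g gext" where
  "gadd (Fin x) (Fin y) = Fin (x + y)"
| "gadd _ _ = Infty"

fun gle :: "'g::linordered_ab_group_add gext \<Rightarrow> 'g gext \<Rightarrow> bool" where
  "gle _ Infty = True"
| "gle Infty (Fin y) = False"
| "gle (Fin x) (Fin y) = (x \<le> y)"

text \<open>Minimum of a set in Gamma-bar (Infty if the set contains no finite value;
  used only for finite sets).\<close>
definition gmin :: "'g::linordered_ab_group_add gext set \<Rightarrow> 'g gext" where
  "gmin S = (if \<exists>x. Fin x \<in> S then Fin (Min {x. Fin x \<in> S}) else Infty)"

definition Delta :: "'e set \<Rightarrow> nat \<Rightarrow> ('e \<Rightarrow> nat) set" where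
  "Delta E k = {\<alpha>. (\<forall>x. x \<notin> E \<longrightarrow> \<alpha> x = 0) \<and> (\<Sum>e\<in>E. \<alpha> e) = k}"

definition Delta_le :: "'e set \<Rightarrow> nat \<Rightarrow> ('e \<Rightarrow> nat) set" where
  "Delta_le E r = {\<alpha>. (\<forall>x. x \<notin> E \<longrightarrow> \<alpha> x = 0) \<and> (\<Sum>e\<in>E. \<alpha> e) \<le> r}"

definition unitv :: "'e \<Rightarrow> 'e \<Rightarrow> nat" where
  "unitv s = (\<lambda>x. if x = s then 1 else 0)"

text \<open>alpha - e_s + e_t (applied only when alpha s \<ge> 1).\<close>
definition exch :: "('e \<Rightarrow> nat) \<Rightarrow> 'e \<Rightarrow> 'e \<Rightarrow> 'e \<Rightarrow> nat" where
  "exch \<alpha> s t = (\<lambda>x. \<alpha> x - unitv s x + unitv t x)"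

definition M_convex :: "'e set \<Rightarrow> nat \<Rightarrow> (('e \<Rightarrow> nat) \<Rightarrow> 'g::linordered_ab_group_add gext) \<Rightarrow> bool" where
  "M_convex E r \<nu> \<longleftrightarrow>
     (\<exists>\<alpha>\<in>Delta E r. \<nu> \<alpha> \<noteq> Infty) \<and>
     (\<forall>\<alpha>\<in>Delta E r. \<forall>\<beta>\<in>Delta E r. \<forall>s\<in>E. \<alpha> s > \<beta> s \<longrightarrow>
        (\<exists>t\<in>E. \<beta> t > \<alpha> t \<and>
           gle (gadd (\<nu> (exch \<alpha> s t)) (\<nu> (exch \<beta> t s))) (gadd (\<nu> \<alpha>) (\<nu> \<beta>))))"

definition nu_tilde :: "'e set \<Rightarrow> nat \<Rightarrow> (('e \<Rightarrow> nat) \<Rightarrow> 'g::linordered_ab_group_add gext) \<Rightarrow> ('e \<Rightarrow> nat) \<Rightarrow> 'g gext" where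
  "nu_tilde E r \<nu> \<alpha> = gmin {\<nu> \<beta> | \<beta>. \<beta> \<in> Delta E r \<and> (\<forall>e\<in>E. \<alpha> e \<le> \<beta> e)}"

definition nu_ext :: "'e set \<Rightarrow> nat \<Rightarrow> (('e \<Rightarrow> nat) \<Rightarrow> 'g::linordered_ab_group_add gext) \<Rightarrow> (('q + 'e) \<Rightarrow> nat) \<Rightarrow> 'g gext" where
  "nu_ext E r \<nu> \<gamma> = nu_tilde E r \<nu> (\<gamma> \<circ> Inr)"

end

theory Submission
  imports Defs
begin

text \<open>
  The function \<open>\<nu>' = nu_tilde E r \<nu>\<close> on vectors of degree at most \<open>r\<close> satisfies two exchange
  properties of M\<natural>-type: a grow exchange (if \<open>|a| < |b|\<close>, some \<open>t\<close> with \<open>a t < b t\<close> can be moved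
  from \<open>b\<close> to \<open>a\<close>) and a move exchange (a coordinate \<open>s\<close> with \<open>b s < a s\<close> is traded for some \<open>t\<close>,
  or, if \<open>|b| < |a|\<close>, simply handed over to \<open>b\<close>).  Both are proved together by induction on the
  deficit \<open>2r - |a| - |b|\<close>.  When \<open>|a| = |b| = r\<close> this is the M-convexity of \<open>\<nu>\<close>.  Otherwise the
  minimum defining \<open>\<nu>'(a)\<close> for an unsaturated \<open>a\<close> is attained at some \<open>\<beta> \<ge> a\<close> with \<open>\<beta> \<noteq> a\<close>, so \<open>a\<close>
  can be raised in one coordinate without changing \<open>\<nu>'(a)\<close>, and the induction hypothesis applies
  to the raised pair.  For the extended function the \<open>Q\<close>-coordinates are invisible, so an exchange
  inside \<open>Q\<close> is trivial, one from \<open>Q\<close> to \<open>E\<close> is a grow exchange and all others are move exchanges.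
\<close>

lemma gle_Infty_right [simp]: "gle x Infty"
  by (cases x) auto

lemma gadd_Infty_right [simp]: "gadd x Infty = Infty"
  by (cases x) auto

lemma gle_refl [simp]: "gle x x"
  by (cases x) auto

lemma gle_trans: "gle x y \<Longrightarrow> gle y z \<Longrightarrow> gle x z"
  by (cases x; cases y; cases z) auto

lemma gle_antisym: "gle x y \<Longrightarrow> gle y x \<Longrightarrow> x = y"
  by (cases x; cases y) auto

lemma Infty_gleD: "gle Infty y \<Longrightarrow> y = Infty"
  by (cases y) auto

lemma gadd_commute: "gadd x y = gadd y x"
  by (cases x; cases y) (auto simp: add.commute)

lemma gadd_mono: "gle x x' \<Longrightarrow> gle y y' \<Longrightarrow> gle (gadd x y) (gadd x' y')"
  by (cases x; cases y; cases x'; cases y') (auto intro: add_mono)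

lemma gadd_mono_left: "gle x x' \<Longrightarrow> gle (gadd x y) (gadd x' y)"
  by (rule gadd_mono) auto

lemma gadd_mono_right: "gle y y' \<Longrightarrow> gle (gadd x y) (gadd x y')"
  by (rule gadd_mono) auto

lemma gle_gadd_chain_cancel:
  fixes A B C D X Y Z :: "'g::linordered_ab_group_add gext"
  assumes "gle (gadd A B) (gadd C D)" and "gle (gadd C X) (gadd A Y)"
    and "gle (gadd Y D) (gadd C Z)" and "C \<noteq> Infty" and "Z \<noteq> Infty"
  shows "gle (gadd X B) (gadd C Z)"
proof -
  have sum3: "x4 + x2 \<le> x3 + x7"
    if "x1 + x2 \<le> x3 + x5" "x3 + x4 \<le> x1 + x6" "x6 + x5 \<le> x3 + x7" for x1 x2 x3 x4 x5 x6 x7 :: 'g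
  proof -
    have "(x1 + x2) + (x3 + x4) + (x6 + x5) \<le> (x3 + x5) + (x1 + x6) + (x3 + x7)"
      using add_mono[OF add_mono[OF that(1) that(2)] that(3)] .
    then show ?thesis by (simp add: algebra_simps)
  qed
  show ?thesis
    using assms by (cases A; cases B; cases C; cases D; cases X; cases Y; cases Z) (auto intro: sum3)
qed

lemma finite_Fin_vimage: "finite S \<Longrightarrow> finite {x. Fin x \<in> S}"
  by (rule finite_vimageI[where h = Fin, unfolded vimage_def]) (simp_all add: inj_def)

lemma gmin_le: assumes "finite S" "x \<in> S" shows "gle (gmin S) x"
proof (cases x)
  case (Fin y)
  with assms have "y \<in> {x. Fin x \<in> S}" by simp
  with Fin finite_Fin_vimage[OF assms(1)] show ?thesis unfolding gmin_def by auto
qed simp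

lemma gmin_in: assumes "finite S" "S \<noteq> {}" shows "gmin S \<in> S"
proof (cases "\<exists>x. Fin x \<in> S")
  case True
  then have "{x. Fin x \<in> S} \<noteq> {}" by auto
  from Min_in[OF finite_Fin_vimage[OF assms(1)] this] True show ?thesis
    unfolding gmin_def by auto
next
  case False
  obtain z where "z \<in> S" using assms(2) by auto
  with False have "z = Infty" by (cases z) auto
  with False \<open>z \<in> S\<close> show ?thesis unfolding gmin_def by auto
qed

lemma gmin_empty [simp]: "gmin {} = Infty"
  by (simp add: gmin_def)

lemma finite_Delta: assumes "finite E" shows "finite (Delta E r)"
proof -
  have "Delta E r \<subseteq> {f. \<forall>x. (x \<in> E \<longrightarrow> f x \<in> {0..r}) \<and> (x \<notin> E \<longrightarrow> f x = 0)}"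
  proof
    fix f assume "f \<in> Delta E r"
    moreover have "x \<in> E \<Longrightarrow> f x \<le> sum f E" for x using assms by (intro member_le_sum) auto
    ultimately show "f \<in> {f. \<forall>x. (x \<in> E \<longrightarrow> f x \<in> {0..r}) \<and> (x \<notin> E \<longrightarrow> f x = 0)}"
      by (auto simp: Delta_def)
  qed
  then show ?thesis using finite_set_of_finite_funs[OF assms, of "{0..r}" 0] finite_subset by auto
qed

locale nu_tilde_finite =
  fixes E :: "'e set" and r :: nat and \<nu> :: "('e \<Rightarrow> nat) \<Rightarrow> 'g::linordered_ab_group_add gext"
  assumes finite_E: "finite E"
begin

abbreviation \<nu>' where "\<nu>' \<equiv> nu_tilde E r \<nu>"
abbreviation deg :: "('e \<Rightarrow> nat) \<Rightarrow> nat" where "deg a \<equiv> sum a E"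

definition incr :: "('e \<Rightarrow> nat) \<Rightarrow> 'e \<Rightarrow> 'e \<Rightarrow> nat" where "incr a u = a(u := Suc (a u))"
definition decr :: "('e \<Rightarrow> nat) \<Rightarrow> 'e \<Rightarrow> 'e \<Rightarrow> nat" where "decr a u = a(u := a u - 1)"

lemma deg_fun_upd: "u \<in> E \<Longrightarrow> deg (a(u := x)) + a u = deg a + x"
proof -
  assume u: "u \<in> E"
  have "deg (a(u := x)) = x + sum (a(u := x)) (E - {u})"
    using sum.remove[OF finite_E u, of "a(u := x)"] by simp
  also have "sum (a(u := x)) (E - {u}) = sum a (E - {u})" by (rule sum.cong) auto
  finally show ?thesis using sum.remove[OF finite_E u, of a] by (simp del: fun_upd_apply)
qed

lemma deg_incr: "u \<in> E \<Longrightarrow> deg (incr a u) = Suc (deg a)"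
  using deg_fun_upd[of u a "Suc (a u)"] unfolding incr_def by simp

lemma deg_decr: "u \<in> E \<Longrightarrow> 0 < a u \<Longrightarrow> Suc (deg (decr a u)) = deg a"
  using deg_fun_upd[of u a "a u - 1"] unfolding decr_def by simp

lemma deg_decr_le: "u \<in> E \<Longrightarrow> deg (decr a u) \<le> deg a"
  using deg_fun_upd[of u a "a u - 1"] unfolding decr_def by simp

lemma Delta_le_iff: "a \<in> Delta_le E r \<longleftrightarrow> (\<forall>x. x \<notin> E \<longrightarrow> a x = 0) \<and> deg a \<le> r"
  by (simp add: Delta_le_def)

lemma incr_Delta_le: "a \<in> Delta_le E r \<Longrightarrow> u \<in> E \<Longrightarrow> deg a < r \<Longrightarrow> incr a u \<in> Delta_le E r"
  using deg_incr[of u a] by (auto simp: Delta_le_iff incr_def)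

lemma decr_Delta_le: "a \<in> Delta_le E r \<Longrightarrow> u \<in> E \<Longrightarrow> decr a u \<in> Delta_le E r"
  using deg_decr_le[of u a] by (auto simp: Delta_le_iff decr_def)

lemma incr_decr_Delta:
  assumes "a \<in> Delta E r" "s \<in> E" "t \<in> E" "0 < a s"
  shows "incr (decr a s) t \<in> Delta E r"
proof -
  have "deg (incr (decr a s) t) = deg a"
    using deg_incr[OF assms(3)] deg_decr[of s a, OF assms(2,4)] by simp
  then show ?thesis using assms by (auto simp: Delta_def incr_def decr_def)
qed

lemma exch_eq_incr_decr: "t \<noteq> s \<Longrightarrow> 0 < a s \<Longrightarrow> exch a s t = incr (decr a s) t"
  by (rule ext) (auto simp: exch_def unitv_def incr_def decr_def)

lemma exists_less_if_deg_less: assumes "deg a < deg b" shows "\<exists>t\<in>E. a t < b t"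
proof (rule ccontr)
  assume "\<not> ?thesis"
  then have "deg b \<le> deg a" by (intro sum_mono) (auto simp: not_less)
  with assms show False by simp
qed

lemma exists_less_if_deg_le:
  assumes "deg a \<le> deg b" "s \<in> E" "b s < a s" shows "\<exists>t\<in>E. a t < b t"
proof (rule ccontr)
  assume "\<not> ?thesis"
  with assms have "deg b < deg a" by (intro sum_strict_mono_ex1[OF finite_E]) (auto simp: not_less)
  with assms show False by simp
qed

lemma eq_on_if_le_and_deg_le: "\<forall>e\<in>E. a e \<le> b e \<Longrightarrow> deg b \<le> deg a \<Longrightarrow> \<forall>e\<in>E. a e = b e"
  using sum_strict_mono_ex1[OF finite_E, of a b] by (meson le_less not_le)

lemma finite_nu_tilde_values: "finite {\<nu> \<beta> | \<beta>. \<beta> \<in> Delta E r \<and> (\<forall>e\<in>E. a e \<le> \<beta> e)}"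
proof -
  have "{\<nu> \<beta> | \<beta>. \<beta> \<in> Delta E r \<and> (\<forall>e\<in>E. a e \<le> \<beta> e)} \<subseteq> \<nu> ` Delta E r" by auto
  then show ?thesis using finite_Delta[OF finite_E] finite_subset by blast
qed

lemma nu_tilde_le: "\<beta> \<in> Delta E r \<Longrightarrow> \<forall>e\<in>E. a e \<le> \<beta> e \<Longrightarrow> gle (\<nu>' a) (\<nu> \<beta>)"
  unfolding nu_tilde_def by (rule gmin_le[OF finite_nu_tilde_values]) auto

lemma nu_tilde_attained:
  assumes "\<nu>' a \<noteq> Infty"
  obtains \<beta> where "\<beta> \<in> Delta E r" "\<forall>e\<in>E. a e \<le> \<beta> e" "\<nu>' a = \<nu> \<beta>"
proof -
  let ?S = "{\<nu> \<beta> | \<beta>. \<beta> \<in> Delta E r \<and> (\<forall>e\<in>E. a e \<le> \<beta> e)}"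
  have "?S \<noteq> {}" using assms unfolding nu_tilde_def by force
  from gmin_in[OF finite_nu_tilde_values this] that show ?thesis unfolding nu_tilde_def by auto
qed

lemma nu_tilde_mono: assumes "\<forall>e\<in>E. a e \<le> a' e" shows "gle (\<nu>' a) (\<nu>' a')"
proof (cases "\<nu>' a' = Infty")
  case False
  then obtain \<beta> where "\<beta> \<in> Delta E r" "\<forall>e\<in>E. a' e \<le> \<beta> e" "\<nu>' a' = \<nu> \<beta>"
    by (rule nu_tilde_attained)
  with nu_tilde_le[of \<beta> a] assms show ?thesis by (metis order_trans)
qed simp

lemma nu_tilde_cong: "\<forall>e\<in>E. a e = a' e \<Longrightarrow> \<nu>' a = \<nu>' a'"
  using nu_tilde_mono gle_antisym by (metis order_refl)

lemma nu_tilde_Delta: assumes "a \<in> Delta E r" shows "\<nu>' a = \<nu> a"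
proof (cases "\<nu>' a = Infty")
  case True
  then show ?thesis using nu_tilde_le[OF assms] Infty_gleD by fastforce
next
  case False
  then obtain \<beta> where \<beta>: "\<beta> \<in> Delta E r" "\<forall>e\<in>E. a e \<le> \<beta> e" "\<nu>' a = \<nu> \<beta>"
    by (rule nu_tilde_attained)
  have "\<forall>e\<in>E. a e = \<beta> e"
    using eq_on_if_le_and_deg_le[OF \<beta>(2)] \<beta>(1) assms by (simp add: Delta_def)
  then have "a = \<beta>" using \<beta>(1) assms unfolding Delta_def
    by (intro ext) (metis (mono_tags, lifting) mem_Collect_eq)
  with \<beta> show ?thesis by simp
qed

lemma nu_tilde_incr_eq:
  assumes "a \<in> Delta_le E r" "deg a < r" "\<nu>' a \<noteq> Infty"
  obtains u where "u \<in> E" "\<nu>' (incr a u) = \<nu>' a"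
proof -
  obtain \<beta> where \<beta>: "\<beta> \<in> Delta E r" "\<forall>e\<in>E. a e \<le> \<beta> e" "\<nu>' a = \<nu> \<beta>"
    using assms(3) by (rule nu_tilde_attained)
  have "deg a < deg \<beta>" using \<beta>(1) assms(2) by (simp add: Delta_def)
  then obtain u where u: "u \<in> E" "a u < \<beta> u" using exists_less_if_deg_less by blast
  have "gle (\<nu>' (incr a u)) (\<nu>' a)" using nu_tilde_le[OF \<beta>(1), of "incr a u"] \<beta> u by (auto simp: incr_def)
  moreover have "gle (\<nu>' a) (\<nu>' (incr a u))" by (rule nu_tilde_mono) (simp add: incr_def)
  ultimately show ?thesis using u gle_antisym that by blast
qed

end

locale M_convex_function = nu_tilde_finite E r \<nu>
  for E :: "'e set" and r :: nat and \<nu> :: "('e \<Rightarrow> nat) \<Rightarrow> 'g::linordered_ab_group_add gext" +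
  assumes M_convex: "M_convex E r \<nu>"
begin

definition grow_exchange :: "('e \<Rightarrow> nat) \<Rightarrow> ('e \<Rightarrow> nat) \<Rightarrow> bool" where
  "grow_exchange a b \<longleftrightarrow> deg a < deg b \<longrightarrow>
    (\<exists>t\<in>E. a t < b t \<and> gle (gadd (\<nu>' (incr a t)) (\<nu>' (decr b t))) (gadd (\<nu>' a) (\<nu>' b)))"

definition move_exchange :: "('e \<Rightarrow> nat) \<Rightarrow> ('e \<Rightarrow> nat) \<Rightarrow> 'e \<Rightarrow> bool" where
  "move_exchange a b s \<longleftrightarrow> b s < a s \<longrightarrow>
    (\<exists>t\<in>E. a t < b t \<and>
       gle (gadd (\<nu>' (incr (decr a s) t)) (\<nu>' (incr (decr b t) s))) (gadd (\<nu>' a) (\<nu>' b))) \<or>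
    (deg b < deg a \<and> gle (gadd (\<nu>' (decr a s)) (\<nu>' (incr b s))) (gadd (\<nu>' a) (\<nu>' b)))"

definition exchange_below :: "nat \<Rightarrow> bool" where
  "exchange_below n \<longleftrightarrow> (\<forall>a b. a \<in> Delta_le E r \<longrightarrow> b \<in> Delta_le E r \<longrightarrow>
     2*r - deg a - deg b < n \<longrightarrow> grow_exchange a b \<and> (\<forall>s\<in>E. move_exchange a b s))"

lemma exchange_belowD:
  assumes "exchange_below n" "a \<in> Delta_le E r" "b \<in> Delta_le E r" "2*r - deg a - deg b < n"
  shows "grow_exchange a b" and "s \<in> E \<Longrightarrow> move_exchange a b s"
  using assms unfolding exchange_below_def by blast+

lemma grow_exchange_step:
  assumes IH: "exchange_below n" and a: "a \<in> Delta_le E r" and b: "b \<in> Delta_le E r"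
    and n: "2*r - deg a - deg b = n"
  shows "grow_exchange a b"
  unfolding grow_exchange_def
proof
  assume lt: "deg a < deg b"
  show "\<exists>t\<in>E. a t < b t \<and> gle (gadd (\<nu>' (incr a t)) (\<nu>' (decr b t))) (gadd (\<nu>' a) (\<nu>' b))"
  proof (cases "\<nu>' a = Infty \<or> \<nu>' b = Infty")
    case True
    then show ?thesis using exists_less_if_deg_less[OF lt] by auto
  next
    case False
    have "deg b \<le> r" using b by (simp add: Delta_le_iff)
    with lt have "deg a < r" by simp
    then obtain u where u: "u \<in> E" "\<nu>' (incr a u) = \<nu>' a"
      using nu_tilde_incr_eq[OF a] False by blast
    show ?thesis
    proof (cases "a u < b u")
      case True
      have "gle (\<nu>' (decr b u)) (\<nu>' b)" by (rule nu_tilde_mono) (auto simp: decr_def)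
      then show ?thesis using u True gadd_mono_right by metis
    next
      case False
      have a': "incr a u \<in> Delta_le E r" using incr_Delta_le[OF a u(1) \<open>deg a < r\<close>] .
      have "move_exchange (incr a u) b u"
        using exchange_belowD(2)[OF IH a' b _ u(1)] deg_incr[OF u(1)] lt \<open>deg b \<le> r\<close> n by simp
      moreover have "b u < incr a u u" using False by (simp add: incr_def)
      moreover have "\<not> deg b < deg (incr a u)" using deg_incr[OF u(1)] lt by simp
      ultimately obtain t where t: "t \<in> E" "incr a u t < b t"
        "gle (gadd (\<nu>' (incr (decr (incr a u) u) t)) (\<nu>' (incr (decr b t) u))) (gadd (\<nu>' (incr a u)) (\<nu>' b))"
        unfolding move_exchange_def by blast
      have "t \<noteq> u" using t(2) False by (auto simp: incr_def)
      have "incr (decr (incr a u) u) t = incr a t" by (simp add: incr_def decr_def)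
      moreover have "gle (\<nu>' (decr b t)) (\<nu>' (incr (decr b t) u))"
        by (rule nu_tilde_mono) (auto simp: decr_def incr_def)
      ultimately have "gle (gadd (\<nu>' (incr a t)) (\<nu>' (decr b t))) (gadd (\<nu>' a) (\<nu>' b))"
        using t(3) u(2) gadd_mono_right gle_trans by metis
      then show ?thesis using t \<open>t \<noteq> u\<close> by (auto simp: incr_def)
    qed
  qed
qed

lemma move_exchange_saturated:
  assumes a: "a \<in> Delta_le E r" and b: "b \<in> Delta_le E r" and "deg a = r" and "deg b = r"
    and s: "s \<in> E" and bs: "b s < a s"
  shows "\<exists>t\<in>E. a t < b t \<and>
    gle (gadd (\<nu>' (incr (decr a s) t)) (\<nu>' (incr (decr b t) s))) (gadd (\<nu>' a) (\<nu>' b))"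
proof -
  have aD: "a \<in> Delta E r" and bD: "b \<in> Delta E r"
    using assms by (auto simp: Delta_def Delta_le_iff)
  obtain t where t: "t \<in> E" "a t < b t"
    "gle (gadd (\<nu> (exch a s t)) (\<nu> (exch b t s))) (gadd (\<nu> a) (\<nu> b))"
    using M_convex aD bD s bs unfolding M_convex_def by blast
  have "t \<noteq> s" using t(2) bs by auto
  then have "exch a s t = incr (decr a s) t" and "exch b t s = incr (decr b t) s"
    using bs t(2) by (auto intro: exch_eq_incr_decr)
  moreover have "\<nu>' (incr (decr a s) t) = \<nu> (incr (decr a s) t)"
    using incr_decr_Delta[OF aD s t(1)] bs by (intro nu_tilde_Delta) auto
  moreover have "\<nu>' (incr (decr b t) s) = \<nu> (incr (decr b t) s)"
    using incr_decr_Delta[OF bD t(1) s] t(2) by (intro nu_tilde_Delta) auto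
  ultimately show ?thesis using t nu_tilde_Delta[OF aD] nu_tilde_Delta[OF bD] by auto
qed

lemma move_exchange_of_incr_right:
  assumes v: "v \<in> E" "\<nu>' (incr b v) = \<nu>' b" "v \<noteq> s" and bs: "b s < a s" and "deg b < deg a"
    and move_v: "move_exchange a (incr b v) s"
  shows "move_exchange a b s"
proof -
  have "incr b v s < a s" using bs v(3) by (simp add: incr_def)
  with move_v consider
      t where "t \<in> E" "a t < incr b v t"
        "gle (gadd (\<nu>' (incr (decr a s) t)) (\<nu>' (incr (decr (incr b v) t) s))) (gadd (\<nu>' a) (\<nu>' (incr b v)))"
    | "gle (gadd (\<nu>' (decr a s)) (\<nu>' (incr (incr b v) s))) (gadd (\<nu>' a) (\<nu>' (incr b v)))"
    unfolding move_exchange_def by blast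
  then show ?thesis
  proof cases
    case 1
    show ?thesis
    proof (cases "t = v")
      case True
      have "incr (decr (incr b v) t) s = incr b s" using True by (simp add: incr_def decr_def)
      moreover have "gle (\<nu>' (decr a s)) (\<nu>' (incr (decr a s) t))"
        by (rule nu_tilde_mono) (auto simp: incr_def decr_def)
      ultimately have "gle (gadd (\<nu>' (decr a s)) (\<nu>' (incr b s))) (gadd (\<nu>' a) (\<nu>' b))"
        using 1(3) v(2) gadd_mono_left gle_trans by metis
      then show ?thesis unfolding move_exchange_def using \<open>deg b < deg a\<close> by blast
    next
      case False
      have "a t < b t" using 1(2) False by (simp add: incr_def)
      moreover have "gle (\<nu>' (incr (decr b t) s)) (\<nu>' (incr (decr (incr b v) t) s))"
        by (rule nu_tilde_mono) (auto simp: incr_def decr_def)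
      then have "gle (gadd (\<nu>' (incr (decr a s) t)) (\<nu>' (incr (decr b t) s))) (gadd (\<nu>' a) (\<nu>' b))"
        using 1(3) v(2) gadd_mono_right gle_trans by metis
      ultimately show ?thesis unfolding move_exchange_def using 1(1) by blast
    qed
  next
    case 2
    have "gle (\<nu>' (incr b s)) (\<nu>' (incr (incr b v) s))" by (rule nu_tilde_mono) (auto simp: incr_def)
    then have "gle (gadd (\<nu>' (decr a s)) (\<nu>' (incr b s))) (gadd (\<nu>' a) (\<nu>' b))"
      using 2 v(2) gadd_mono_right gle_trans by metis
    then show ?thesis unfolding move_exchange_def using \<open>deg b < deg a\<close> by blast
  qed
qed

lemma move_exchange_b_unsaturated:
  assumes IH: "exchange_below n" and a: "a \<in> Delta_le E r" and b: "b \<in> Delta_le E r"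
    and n: "2*r - deg a - deg b = n" and s: "s \<in> E" and bs: "b s < a s"
    and fin_b: "\<nu>' b \<noteq> Infty" and "deg a = r" and "deg b < r"
  shows "move_exchange a b s"
proof -
  obtain v where v: "v \<in> E" "\<nu>' (incr b v) = \<nu>' b"
    using nu_tilde_incr_eq[OF b \<open>deg b < r\<close> fin_b] by blast
  have "deg b < deg a" using assms by simp
  show ?thesis
  proof (cases "v = s")
    case True
    have "gle (\<nu>' (decr a s)) (\<nu>' a)" by (rule nu_tilde_mono) (auto simp: decr_def)
    then show ?thesis unfolding move_exchange_def using True v \<open>deg b < deg a\<close> gadd_mono_left by metis
  next
    case False
    have b': "incr b v \<in> Delta_le E r" using incr_Delta_le[OF b v(1) \<open>deg b < r\<close>] .
    have "move_exchange a (incr b v) s"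
      using exchange_belowD(2)[OF IH a b' _ s] deg_incr[OF v(1), of b] assms by simp
    with v False bs \<open>deg b < deg a\<close> show ?thesis by (rule move_exchange_of_incr_right)
  qed
qed

lemma nu_tilde_pivot:
  assumes IH: "exchange_below (2*r - deg a - deg a)" and a: "a \<in> Delta_le E r" and "deg a < r"
    and u: "u \<in> E" "\<nu>' (incr a u) = \<nu>' a" and s: "s \<in> E" "0 < a s"
    and t: "t \<in> E" "t \<noteq> s" "t \<noteq> u"
  shows "gle (gadd (\<nu>' a) (\<nu>' (incr (decr a s) t))) (gadd (\<nu>' (incr a t)) (\<nu>' (decr (incr a u) s)))"
proof (cases "u = s")
  case True
  have "\<nu>' (decr (incr a u) s) = \<nu>' a" by (rule nu_tilde_cong) (use True in \<open>auto simp: incr_def decr_def\<close>)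
  moreover have "gle (\<nu>' (incr (decr a s) t)) (\<nu>' (incr a t))"
    by (rule nu_tilde_mono) (auto simp: incr_def decr_def)
  ultimately show ?thesis using gadd_mono_right gadd_commute by metis
next
  case False
  let ?a' = "incr a t" and ?b' = "decr (incr a u) s"
  have a': "?a' \<in> Delta_le E r" using incr_Delta_le[OF a t(1) \<open>deg a < r\<close>] .
  have b': "?b' \<in> Delta_le E r" using decr_Delta_le[OF incr_Delta_le[OF a u(1) \<open>deg a < r\<close>] s(1)] .
  have "Suc (deg ?b') = deg (incr a u)" by (rule deg_decr[OF s(1)]) (use s in \<open>simp add: incr_def\<close>)
  then have "deg ?b' = deg a" using deg_incr[OF u(1)] by simp
  then have "move_exchange ?a' ?b' t"
    using exchange_belowD(2)[OF IH a' b' _ t(1)] deg_incr[OF t(1), of a] \<open>deg a < r\<close> by simp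
  moreover have "?b' t < ?a' t" using t by (simp add: incr_def decr_def)
  ultimately consider
      t' where "t' \<in> E" "?a' t' < ?b' t'"
        "gle (gadd (\<nu>' (incr (decr ?a' t) t')) (\<nu>' (incr (decr ?b' t') t))) (gadd (\<nu>' ?a') (\<nu>' ?b'))"
    | "gle (gadd (\<nu>' (decr ?a' t)) (\<nu>' (incr ?b' t))) (gadd (\<nu>' ?a') (\<nu>' ?b'))"
    unfolding move_exchange_def by blast
  then show ?thesis
  proof cases
    case 1
    have "t' = u" using 1(2) by (auto simp: incr_def decr_def split: if_splits)
    then have "incr (decr ?a' t) t' = incr a u" by (simp add: incr_def decr_def)
    moreover have "\<nu>' (incr (decr ?b' t') t) = \<nu>' (incr (decr a s) t)"
      by (rule nu_tilde_cong) (use \<open>t' = u\<close> False t in \<open>auto simp: incr_def decr_def\<close>)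
    ultimately show ?thesis using 1(3) u(2) by simp
  next
    case 2
    have "decr ?a' t = a" by (simp add: incr_def decr_def)
    moreover have "gle (\<nu>' (incr (decr a s) t)) (\<nu>' (incr ?b' t))"
      by (rule nu_tilde_mono) (auto simp: incr_def decr_def)
    ultimately show ?thesis using 2 gadd_mono_right gle_trans by metis
  qed
qed

lemma move_exchange_equal_degree:
  assumes IH: "exchange_below n" and a: "a \<in> Delta_le E r" and b: "b \<in> Delta_le E r"
    and n: "2*r - deg a - deg b = n" and s: "s \<in> E" and bs: "b s < a s"
    and fin_a: "\<nu>' a \<noteq> Infty" and fin_b: "\<nu>' b \<noteq> Infty" and "deg a < r" and "deg b = deg a"
    and u: "u \<in> E" "\<nu>' (incr a u) = \<nu>' a"
    and move_u: "gle (gadd (\<nu>' (decr (incr a u) s)) (\<nu>' (incr b s))) (gadd (\<nu>' a) (\<nu>' b))"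
  shows "move_exchange a b s"
proof (cases "u \<noteq> s \<and> a u < b u")
  case True
  have "\<nu>' (incr (decr a s) u) = \<nu>' (decr (incr a u) s)"
    by (rule nu_tilde_cong) (use True in \<open>auto simp: incr_def decr_def\<close>)
  moreover have "gle (\<nu>' (incr (decr b u) s)) (\<nu>' (incr b s))"
    by (rule nu_tilde_mono) (auto simp: incr_def decr_def)
  ultimately have "gle (gadd (\<nu>' (incr (decr a s) u)) (\<nu>' (incr (decr b u) s))) (gadd (\<nu>' a) (\<nu>' b))"
    using move_u gadd_mono_right gle_trans by metis
  then show ?thesis unfolding move_exchange_def using True u(1) by blast
next
  case False
  have b': "incr b s \<in> Delta_le E r" using incr_Delta_le[OF b s] assms by simp
  have "grow_exchange a (incr b s)"
    using exchange_belowD(1)[OF IH a b'] deg_incr[OF s, of b] assms by simp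
  then obtain t where t: "t \<in> E" "a t < incr b s t"
    and grow_t: "gle (gadd (\<nu>' (incr a t)) (\<nu>' (decr (incr b s) t))) (gadd (\<nu>' a) (\<nu>' (incr b s)))"
    unfolding grow_exchange_def using deg_incr[OF s, of b] \<open>deg b = deg a\<close> by auto
  have "t \<noteq> s" using t(2) bs by (auto simp: incr_def)
  then have "a t < b t" using t(2) by (simp add: incr_def)
  then have "t \<noteq> u" using False \<open>t \<noteq> s\<close> by auto
  have "gle (gadd (\<nu>' a) (\<nu>' (incr (decr a s) t))) (gadd (\<nu>' (incr a t)) (\<nu>' (decr (incr a u) s)))"
    using nu_tilde_pivot[OF _ a \<open>deg a < r\<close> u(1,2) s _ t(1) \<open>t \<noteq> s\<close> \<open>t \<noteq> u\<close>] IH n bs assms by simp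
  from gle_gadd_chain_cancel[OF grow_t this move_u fin_a fin_b]
  have "gle (gadd (\<nu>' (incr (decr a s) t)) (\<nu>' (decr (incr b s) t))) (gadd (\<nu>' a) (\<nu>' b))" .
  moreover have "\<nu>' (decr (incr b s) t) = \<nu>' (incr (decr b t) s)"
    by (rule nu_tilde_cong) (use \<open>t \<noteq> s\<close> in \<open>auto simp: incr_def decr_def\<close>)
  ultimately show ?thesis unfolding move_exchange_def using t(1) \<open>a t < b t\<close> by auto
qed

lemma move_exchange_a_unsaturated:
  assumes IH: "exchange_below n" and a: "a \<in> Delta_le E r" and b: "b \<in> Delta_le E r"
    and n: "2*r - deg a - deg b = n" and s: "s \<in> E" and bs: "b s < a s"
    and fin_a: "\<nu>' a \<noteq> Infty" and fin_b: "\<nu>' b \<noteq> Infty" and "deg a < r"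
  shows "move_exchange a b s"
proof -
  have "deg b \<le> r" using b by (simp add: Delta_le_iff)
  obtain u where u: "u \<in> E" "\<nu>' (incr a u) = \<nu>' a" using nu_tilde_incr_eq[OF a \<open>deg a < r\<close> fin_a] by blast
  have a': "incr a u \<in> Delta_le E r" using incr_Delta_le[OF a u(1) \<open>deg a < r\<close>] .
  have "move_exchange (incr a u) b s"
    using exchange_belowD(2)[OF IH a' b _ s] deg_incr[OF u(1)] \<open>deg a < r\<close> \<open>deg b \<le> r\<close> n by simp
  moreover have "b s < incr a u s" using bs by (auto simp: incr_def)
  ultimately consider
      t where "t \<in> E" "incr a u t < b t"
        "gle (gadd (\<nu>' (incr (decr (incr a u) s) t)) (\<nu>' (incr (decr b t) s))) (gadd (\<nu>' (incr a u)) (\<nu>' b))"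
    | "deg b < deg (incr a u)" "gle (gadd (\<nu>' (decr (incr a u) s)) (\<nu>' (incr b s))) (gadd (\<nu>' (incr a u)) (\<nu>' b))"
    unfolding move_exchange_def by blast
  then show ?thesis
  proof cases
    case 1
    have "gle (\<nu>' (incr (decr a s) t)) (\<nu>' (incr (decr (incr a u) s) t))"
      by (rule nu_tilde_mono) (auto simp: incr_def decr_def)
    then have "gle (gadd (\<nu>' (incr (decr a s) t)) (\<nu>' (incr (decr b t) s))) (gadd (\<nu>' a) (\<nu>' b))"
      using 1(3) u(2) gadd_mono_left gle_trans by metis
    moreover have "a t < b t" using 1(2) by (auto simp: incr_def split: if_splits)
    ultimately show ?thesis unfolding move_exchange_def using 1(1) by blast
  next
    case 2
    then have move_u: "gle (gadd (\<nu>' (decr (incr a u) s)) (\<nu>' (incr b s))) (gadd (\<nu>' a) (\<nu>' b))"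
      using u(2) by simp
    consider "deg b < deg a" | "deg b = deg a" using 2(1) deg_incr[OF u(1), of a] by linarith
    then show ?thesis
    proof cases
      case 1
      have "gle (\<nu>' (decr a s)) (\<nu>' (decr (incr a u) s))" by (rule nu_tilde_mono) (auto simp: incr_def decr_def)
      then show ?thesis unfolding move_exchange_def using move_u 1 gadd_mono_left gle_trans by metis
    next
      case 2
      then show ?thesis
        using move_exchange_equal_degree[OF IH a b n s bs fin_a fin_b \<open>deg a < r\<close> _ u move_u] by simp
    qed
  qed
qed

lemma move_exchange_step:
  assumes IH: "exchange_below n" and a: "a \<in> Delta_le E r" and b: "b \<in> Delta_le E r"
    and n: "2*r - deg a - deg b = n" and s: "s \<in> E"
  shows "move_exchange a b s"
proof (cases "b s < a s")
  case bs: True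
  have "deg a \<le> r" "deg b \<le> r" using a b by (auto simp: Delta_le_iff)
  show ?thesis
  proof (cases "\<nu>' a = Infty \<or> \<nu>' b = Infty")
    case True
    then show ?thesis unfolding move_exchange_def
      using exists_less_if_deg_le[of a b s] s bs by (cases "deg b < deg a") auto
  next
    case False
    then consider "deg a < r" | "deg a = r" "deg b < r" | "deg a = r" "deg b = r"
      using \<open>deg a \<le> r\<close> \<open>deg b \<le> r\<close> by linarith
    then show ?thesis
    proof cases
      case 1
      then show ?thesis using move_exchange_a_unsaturated[OF IH a b n s bs] False by blast
    next
      case 2
      then show ?thesis using move_exchange_b_unsaturated[OF IH a b n s bs] False by blast
    next
      case 3
      then show ?thesis unfolding move_exchange_def using move_exchange_saturated[OF a b _ _ s bs] by blast
    qed
  qed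
qed (simp add: move_exchange_def)

lemma exchange_Delta_le:
  assumes "a \<in> Delta_le E r" "b \<in> Delta_le E r"
  shows "grow_exchange a b" and "s \<in> E \<Longrightarrow> move_exchange a b s"
proof -
  have "grow_exchange a b \<and> (\<forall>s\<in>E. move_exchange a b s)"
    if "a \<in> Delta_le E r" "b \<in> Delta_le E r" "2*r - deg a - deg b = n" for n a b
    using that
  proof (induction n arbitrary: a b rule: less_induct)
    case (less n)
    have "exchange_below n" unfolding exchange_below_def using less.IH by blast
    then show ?case using grow_exchange_step move_exchange_step less.prems by blast
  qed
  with assms show "grow_exchange a b" and "s \<in> E \<Longrightarrow> move_exchange a b s" by blast+
qed

lemma exch_Inl_Inl_comp_Inr: "exch \<gamma> (Inl q) (Inl q') \<circ> Inr = \<gamma> \<circ> Inr"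
  by (rule ext) (simp add: exch_def unitv_def)

lemma exch_Inl_Inr_comp_Inr: "exch \<gamma> (Inl q) (Inr t) \<circ> Inr = incr (\<gamma> \<circ> Inr) t"
  by (rule ext) (simp add: exch_def unitv_def incr_def)

lemma exch_Inr_Inl_comp_Inr: "exch \<gamma> (Inr t) (Inl q) \<circ> Inr = decr (\<gamma> \<circ> Inr) t"
  by (rule ext) (simp add: exch_def unitv_def decr_def)

lemma exch_Inr_Inr_comp_Inr: "t \<noteq> e \<Longrightarrow> exch \<gamma> (Inr e) (Inr t) \<circ> Inr = incr (decr (\<gamma> \<circ> Inr) e) t"
  by (rule ext) (auto simp: exch_def unitv_def incr_def decr_def)

lemma Delta_Plus_split:
  assumes "finite Q" "\<gamma> \<in> Delta (Q <+> E) r"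
  shows "sum (\<gamma> \<circ> Inl) Q + deg (\<gamma> \<circ> Inr) = r" and "\<gamma> \<circ> Inr \<in> Delta_le E r"
proof -
  show deg: "sum (\<gamma> \<circ> Inl) Q + deg (\<gamma> \<circ> Inr) = r"
    using assms sum.Plus[OF assms(1) finite_E, of \<gamma>] by (simp add: Delta_def)
  show "\<gamma> \<circ> Inr \<in> Delta_le E r" using assms deg by (auto simp: Delta_def Delta_le_iff)
qed

lemma nu_ext_not_Infty:
  assumes "finite Q"
  shows "\<exists>\<gamma>\<in>Delta (Q <+> E) r. (nu_ext E r \<nu> :: ('q + 'e \<Rightarrow> nat) \<Rightarrow> 'g gext) \<gamma> \<noteq> Infty"
proof -
  obtain \<beta> where \<beta>: "\<beta> \<in> Delta E r" "\<nu> \<beta> \<noteq> Infty" using M_convex unfolding M_convex_def by blast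
  define \<gamma> :: "'q + 'e \<Rightarrow> nat" where "\<gamma> = case_sum (\<lambda>_. 0) \<beta>"
  have "\<gamma> \<circ> Inr = \<beta>" by (rule ext) (simp add: \<gamma>_def)
  moreover have "\<gamma> \<in> Delta (Q <+> E) r"
    using \<beta>(1) sum.Plus[OF assms finite_E, of \<gamma>] unfolding Delta_def
    by (auto simp: \<gamma>_def split: sum.splits)
  ultimately show ?thesis using nu_tilde_Delta[OF \<beta>(1)] \<beta>(2) by (metis nu_ext_def)
qed

lemma nu_ext_exchange_Inl:
  fixes \<gamma> \<delta> :: "'q + 'e \<Rightarrow> nat"
  assumes "finite Q" and \<gamma>: "\<gamma> \<in> Delta (Q <+> E) r" and \<delta>: "\<delta> \<in> Delta (Q <+> E) r"
    and q: "q \<in> Q" and less: "\<delta> (Inl q) < \<gamma> (Inl q)"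
  shows "\<exists>t\<in>Q <+> E. \<gamma> t < \<delta> t \<and> gle (gadd (nu_ext E r \<nu> (exch \<gamma> (Inl q) t)) (nu_ext E r \<nu> (exch \<delta> t (Inl q))))
    (gadd (nu_ext E r \<nu> \<gamma>) (nu_ext E r \<nu> \<delta>))"
proof (cases "\<exists>q'\<in>Q. \<gamma> (Inl q') < \<delta> (Inl q')")
  case True
  then obtain q' where "q' \<in> Q" "\<gamma> (Inl q') < \<delta> (Inl q')" by blast
  then show ?thesis by (intro bexI[of _ "Inl q'"]) (auto simp: nu_ext_def exch_Inl_Inl_comp_Inr)
next
  case False
  have "sum (\<delta> \<circ> Inl) Q < sum (\<gamma> \<circ> Inl) Q"
    using False less q by (intro sum_strict_mono_ex1[OF \<open>finite Q\<close>]) (auto simp: not_less)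
  then have "deg (\<gamma> \<circ> Inr) < deg (\<delta> \<circ> Inr)"
    using Delta_Plus_split(1)[OF \<open>finite Q\<close> \<gamma>] Delta_Plus_split(1)[OF \<open>finite Q\<close> \<delta>] by simp
  with exchange_Delta_le(1)[OF Delta_Plus_split(2)[OF \<open>finite Q\<close> \<gamma>] Delta_Plus_split(2)[OF \<open>finite Q\<close> \<delta>]]
  obtain t where "t \<in> E" "\<gamma> (Inr t) < \<delta> (Inr t)"
    "gle (gadd (\<nu>' (incr (\<gamma> \<circ> Inr) t)) (\<nu>' (decr (\<delta> \<circ> Inr) t))) (gadd (\<nu>' (\<gamma> \<circ> Inr)) (\<nu>' (\<delta> \<circ> Inr)))"
    unfolding grow_exchange_def by auto
  then show ?thesis
    by (intro bexI[of _ "Inr t"]) (auto simp: nu_ext_def exch_Inl_Inr_comp_Inr exch_Inr_Inl_comp_Inr)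
qed

lemma nu_ext_exchange_Inr:
  fixes \<gamma> \<delta> :: "'q + 'e \<Rightarrow> nat"
  assumes "finite Q" and \<gamma>: "\<gamma> \<in> Delta (Q <+> E) r" and \<delta>: "\<delta> \<in> Delta (Q <+> E) r"
    and e: "e \<in> E" and less: "\<delta> (Inr e) < \<gamma> (Inr e)"
  shows "\<exists>t\<in>Q <+> E. \<gamma> t < \<delta> t \<and> gle (gadd (nu_ext E r \<nu> (exch \<gamma> (Inr e) t)) (nu_ext E r \<nu> (exch \<delta> t (Inr e))))
    (gadd (nu_ext E r \<nu> \<gamma>) (nu_ext E r \<nu> \<delta>))"
proof -
  let ?a = "\<gamma> \<circ> Inr" and ?b = "\<delta> \<circ> Inr"
  have "move_exchange ?a ?b e"
    using exchange_Delta_le(2)[OF Delta_Plus_split(2)[OF \<open>finite Q\<close> \<gamma>] Delta_Plus_split(2)[OF \<open>finite Q\<close> \<delta>] e] .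
  with less consider
      t where "t \<in> E" "?a t < ?b t"
        "gle (gadd (\<nu>' (incr (decr ?a e) t)) (\<nu>' (incr (decr ?b t) e))) (gadd (\<nu>' ?a) (\<nu>' ?b))"
    | "deg ?b < deg ?a" "gle (gadd (\<nu>' (decr ?a e)) (\<nu>' (incr ?b e))) (gadd (\<nu>' ?a) (\<nu>' ?b))"
    unfolding move_exchange_def by auto
  then show ?thesis
  proof cases
    case 1
    then have "t \<noteq> e" using less by auto
    with 1 show ?thesis by (intro bexI[of _ "Inr t"]) (auto simp: nu_ext_def exch_Inr_Inr_comp_Inr)
  next
    case 2
    then have "sum (\<gamma> \<circ> Inl) Q < sum (\<delta> \<circ> Inl) Q"
      using Delta_Plus_split(1)[OF \<open>finite Q\<close> \<gamma>] Delta_Plus_split(1)[OF \<open>finite Q\<close> \<delta>] by simp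
    have "\<exists>q\<in>Q. \<gamma> (Inl q) < \<delta> (Inl q)"
    proof (rule ccontr)
      assume "\<not> ?thesis"
      then have "sum (\<delta> \<circ> Inl) Q \<le> sum (\<gamma> \<circ> Inl) Q" by (intro sum_mono) (auto simp: not_less)
      with \<open>sum (\<gamma> \<circ> Inl) Q < sum (\<delta> \<circ> Inl) Q\<close> show False by simp
    qed
    then obtain q where "q \<in> Q" "\<gamma> (Inl q) < \<delta> (Inl q)" by blast
    with 2 show ?thesis
      by (intro bexI[of _ "Inl q"]) (auto simp: nu_ext_def exch_Inl_Inr_comp_Inr exch_Inr_Inl_comp_Inr)
  qed
qed

end

theorem proposition1p3:
  fixes E :: "'e set" and Q :: "'q set" and r :: nat
    and \<nu> :: "('e \<Rightarrow> nat) \<Rightarrow> 'g::linordered_ab_group_add gext"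
  assumes "finite E" and "finite Q"
    and "M_convex E r \<nu>"
  shows "M_convex (Q <+> E) r (nu_ext E r \<nu> :: ('q + 'e \<Rightarrow> nat) \<Rightarrow> 'g gext)"
proof -
  interpret M_convex_function E r \<nu> using assms(1,3) by unfold_locales
  show ?thesis
    unfolding M_convex_def
  proof (intro conjI ballI impI)
    show "\<exists>\<gamma>\<in>Delta (Q <+> E) r. nu_ext E r \<nu> \<gamma> \<noteq> Infty" by (rule nu_ext_not_Infty[OF assms(2)])
  next
    fix \<gamma> \<delta> :: "'q + 'e \<Rightarrow> nat" and \<sigma>
    assume "\<gamma> \<in> Delta (Q <+> E) r" "\<delta> \<in> Delta (Q <+> E) r" "\<sigma> \<in> Q <+> E" "\<delta> \<sigma> < \<gamma> \<sigma>"
    then show "\<exists>t\<in>Q <+> E. \<gamma> t < \<delta> t \<and> gle (gadd (nu_ext E r \<nu> (exch \<gamma> \<sigma> t)) (nu_ext E r \<nu> (exch \<delta> t \<sigma>)))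
      (gadd (nu_ext E r \<nu> \<gamma>) (nu_ext E r \<nu> \<delta>))"
      by (elim PlusE) (auto intro: nu_ext_exchange_Inl[OF assms(2)] nu_ext_exchange_Inr[OF assms(2)])
  qed
qed

end
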